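(* For $n\geqslant 3$, $\det(M_n)=(-1)^{n-3}(n-2)^{n-2}(n^2-5n+5)$. In particular, the matrix $M_n$ is non-degenerate.
   Context: Write a permutation $\pi$ of $\{1,\ldots,n\}$ as $[\pi_1\ldots\pi_n]$ with $\pi_j=\pi(j)$. For $i\in\{2,\ldots,n\}$ and $k\in\{3,\ldots,n\}$, define $f_i^{2,k}:\mathrm{Sym}_n\to\mathbb{R}$ by $f_i^{2,k}(\pi)=1$ if $\pi_2=i$, $-1$ if $\pi_k=i$, and $0$ otherwise. For distinct $r,s\in\{2,\ldots,n\}$, $(1\,r\,s)$ denotes the $3$-cycle mapping $1\mapsto r$, $r\mapsto s$, $s\mapsto 1$. $M_n$ is the $(n-1)(n-2)\times(n-1)(n-2)$ matrix whose entry in row $f$ and column $\pi$ is $f(\pi)$, with rows and columns ordered as follows. Rows are in $n-1$ consecutive cohorts indexed by $i=2,3,\ldots,n$: cohort $i=2$ is $f_2^{2,3},f_2^{2,4},\ldots,f_2^{2,n}$; for $i\ge3$, cohort $i$ is $f_i^{2,i}$ followed by the $f_i^{2,k}$ with $k\in\{3,\ldots,n\}\setminus\{i\}$ in increasing order of $k$. Columns are in $n-1$ consecutive blocks indexed by $s=2,3,\ldots,n$: block $s$ is $(1\,r\,s)$ for $r\in\{2,\ldots,n\}\setminus\{s\}$ in increasing order of $r$. *)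

theory Defs
  imports "Jordan_Normal_Form.Determinant"
begin

text \<open>Permutations of {1..n} are represented as functions nat => nat (identity outside {1..n}).
  cyc3 r s is the 3-cycle (1 r s): 1 -> r, r -> s, s -> 1.\<close>
definition cyc3 :: "nat \<Rightarrow> nat \<Rightarrow> nat \<Rightarrow> nat" where
  "cyc3 r s j = (if j = 1 then r else if j = r then s else if j = s then 1 else j)"

definition fval :: "nat \<Rightarrow> nat \<Rightarrow> (nat \<Rightarrow> nat) \<Rightarrow> real" where
  "fval i k p = (if p 2 = i then 1 else if p k = i then -1 else 0)"

text \<open>Row order: cohorts i = 2..n; each row is a pair (i,k) standing for f_i^{2,k}.\<close>
definition row_list :: "nat \<Rightarrow> (nat \<times> nat) list" where
  "row_list n = concat (map (\<lambda>i. if i = 2 then map (\<lambda>k. (2, k)) [3..<n+1]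
       else (i, i) # map (\<lambda>k. (i, k)) (filter (\<lambda>k. k \<noteq> i) [3..<n+1])) [2..<n+1])"

text \<open>Column order: blocks s = 2..n; each column is a pair (r,s) standing for (1 r s).\<close>
definition col_list :: "nat \<Rightarrow> (nat \<times> nat) list" where
  "col_list n = concat (map (\<lambda>s. map (\<lambda>r. (r, s)) (filter (\<lambda>r. r \<noteq> s) [2..<n+1])) [2..<n+1])"

definition M :: "nat \<Rightarrow> real mat" where
  "M n = mat (length (row_list n)) (length (col_list n))
     (\<lambda>(a, b). fval (fst (row_list n ! a)) (snd (row_list n ! a))
                 (cyc3 (fst (col_list n ! b)) (snd (col_list n ! b))))"

end

theory Submission
  imports Defs
begin

(* Write N = n - 2. Adding the identity to M n leaves a matrix with only 2N + 1 distinct rows,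
   so M n + 1 = S * R where S is the 0/1 matrix selecting the type of each row. Hence
   det (M n) = det (1 - S * R) = det (1 - R * S) by Sylvester's determinant identity (the size
   N(N + 1) is even), a determinant of size 2N + 1. Eliminating with its pivot 1 and then with
   an identity block leaves the N x N matrix N(N - 1) J - N 1, whose determinant is
   (-N)^N (1 - N(N - 1)). *)

lemma det_four_block_mat_one_upper_left:
  fixes B :: "'a :: idom mat"
  assumes B: "B \<in> carrier_mat k l" and C: "C \<in> carrier_mat l k" and D: "D \<in> carrier_mat l l"
  shows "det (four_block_mat (1\<^sub>m k) B C D) = det (D - C * B)"
proof -
  let ?L = "four_block_mat (1\<^sub>m k) (0\<^sub>m k l) C (1\<^sub>m l)"
  let ?R = "four_block_mat (1\<^sub>m k) B (0\<^sub>m l k) (D - C * B)"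
  have "C * B + 1\<^sub>m l * (D - C * B) = D"
    by (rule eq_matI) (use B C D in auto)
  then have "four_block_mat (1\<^sub>m k) B C D = ?L * ?R"
    by (subst mult_four_block_mat[of _ k k _ l _ l _ _ k _ l]) (use B C D in auto)
  moreover have "det ?L = 1"
    by (subst det_four_block_mat_upper_right_zero[of _ k _ l]) (use C in auto)
  moreover have "det ?R = det (D - C * B)"
    by (subst det_four_block_mat_lower_left_zero[of _ k _ l]) (use B C D in auto)
  moreover have "det (?L * ?R) = det ?L * det ?R"
    by (rule det_mult[of _ "k + l"]) (use B C D in auto)
  ultimately show ?thesis by simp
qed

lemma det_one_minus_mult_commute:
  fixes U :: "'a :: idom mat"
  assumes U: "U \<in> carrier_mat m q" and V: "V \<in> carrier_mat q m"
  shows "det (1\<^sub>m m - U * V) = det (1\<^sub>m q - V * U)"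
proof -
  let ?X = "four_block_mat (1\<^sub>m m) U V (1\<^sub>m q)"
  let ?Y = "four_block_mat (1\<^sub>m m) (0\<^sub>m m q) (- V) (1\<^sub>m q)"
  have "?X * ?Y = four_block_mat (1\<^sub>m m - U * V) U (0\<^sub>m q m) (1\<^sub>m q)"
    by (subst mult_four_block_mat[of _ m m _ q _ q _ _ m _ q]) (use U V in \<open>auto intro!: eq_matI\<close>)
  moreover have "det (?X * ?Y) = det ?X * det ?Y"
    by (rule det_mult[of _ "m + q"]) (use U V in auto)
  moreover have "det (four_block_mat (1\<^sub>m m - U * V) U (0\<^sub>m q m) (1\<^sub>m q)) = det (1\<^sub>m m - U * V)"
    by (subst det_four_block_mat_lower_left_zero[of _ m _ q]) (use U V in auto)
  moreover have "det ?Y = 1"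
    by (subst det_four_block_mat_upper_right_zero[of _ m _ q]) (use V in auto)
  moreover have "det ?X = det (1\<^sub>m q - V * U)"
    by (rule det_four_block_mat_one_upper_left) (use U V in auto)
  ultimately show ?thesis by simp
qed

lemma det_pivot_one:
  fixes A :: "'a :: idom mat"
  assumes A: "A \<in> carrier_mat (Suc k) (Suc k)" and pivot: "A $$ (0, 0) = 1"
  shows "det A = det (mat k k (\<lambda>(i, j). A $$ (Suc i, Suc j) - A $$ (Suc i, 0) * A $$ (0, Suc j)))"
proof -
  let ?r = "mat 1 k (\<lambda>(_, j). A $$ (0, Suc j))"
  let ?c = "mat k 1 (\<lambda>(i, _). A $$ (Suc i, 0))"
  let ?D = "mat k k (\<lambda>(i, j). A $$ (Suc i, Suc j))"
  have "A = four_block_mat (1\<^sub>m 1) ?r ?c ?D"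
    using A pivot by (auto intro!: eq_matI)
  moreover have "det (four_block_mat (1\<^sub>m 1) ?r ?c ?D) = det (?D - ?c * ?r)"
    by (rule det_four_block_mat_one_upper_left) auto
  ultimately have "det A = det (?D - ?c * ?r)" by simp
  also have "?D - ?c * ?r = mat k k (\<lambda>(i, j). A $$ (Suc i, Suc j) - A $$ (Suc i, 0) * A $$ (0, Suc j))"
    by (auto intro!: eq_matI simp: scalar_prod_def)
  finally show ?thesis .
qed

lemma det_scalar_plus_const_mat:
  fixes a b :: "'a :: field"
  assumes "a \<noteq> 0"
  shows "det (mat k k (\<lambda>(i, j). (if i = j then a else 0) + b)) = a ^ k * (1 + of_nat k * b / a)"
proof -
  let ?U = "mat k 1 (\<lambda>_. - b / a)"
  let ?V = "mat 1 k (\<lambda>_. 1)"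
  have "mat k k (\<lambda>(i, j). (if i = j then a else 0) + b) = a \<cdot>\<^sub>m (1\<^sub>m k - ?U * ?V)"
    using assms by (auto intro!: eq_matI simp: scalar_prod_def field_simps)
  then have "det (mat k k (\<lambda>(i, j). (if i = j then a else 0) + b)) = a ^ k * det (1\<^sub>m 1 - ?V * ?U)"
    using det_one_minus_mult_commute[of ?U k 1 ?V] by simp
  also have "det (1\<^sub>m 1 - ?V * ?U) = 1 + of_nat k * b / a"
    by (subst det_single) (auto simp: scalar_prod_def)
  finally show ?thesis .
qed

definition selector_mat :: "nat \<Rightarrow> nat \<Rightarrow> (nat \<Rightarrow> nat) \<Rightarrow> 'a :: zero_neq_one mat" where
  "selector_mat m q \<tau> = mat m q (\<lambda>(c, y). if y = \<tau> c then 1 else 0)"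

lemma dim_selector_mat [simp]:
  "dim_row (selector_mat m q \<tau>) = m" "dim_col (selector_mat m q \<tau>) = q"
  by (simp_all add: selector_mat_def)

lemma selector_mat_mult_index:
  fixes V :: "'a :: semiring_1 mat"
  assumes "V \<in> carrier_mat q k" "p < m" "c < k" "\<tau> p < q"
  shows "(selector_mat m q \<tau> * V) $$ (p, c) = V $$ (\<tau> p, c)"
  using assms by (simp add: selector_mat_def scalar_prod_def if_distrib[of "\<lambda>x. x * _"] cong: if_cong)

lemma mult_selector_mat_index:
  fixes V :: "'a :: semiring_1 mat"
  assumes "V \<in> carrier_mat k m" "x < k" "y < q"
  shows "(V * selector_mat m q \<tau>) $$ (x, y) = (\<Sum>c<m. if \<tau> c = y then V $$ (x, c) else 0)"
  using assms by (auto simp: selector_mat_def scalar_prod_def atLeast0LessThan intro!: sum.cong)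

lemma sum_div_mod:
  fixes N :: nat
  assumes "0 < N"
  shows "(\<Sum>c<K * N. g (c div N) (c mod N)) = (\<Sum>(a, j)\<in>{..<K} \<times> {..<N}. g a j)"
proof -
  have "a * N + j < K * N" if "a < K" "j < N" for a j
  proof -
    have "a * N + j < (a + 1) * N" using that by simp
    also have "\<dots> \<le> K * N" using that by (intro mult_right_mono) auto
    finally show ?thesis .
  qed
  then have "bij_betw (\<lambda>c. (c div N, c mod N)) {..<K * N} ({..<K} \<times> {..<N})"
    by (intro bij_betw_byWitness[where f' = "\<lambda>(a, j). a * N + j"])
      (use assms in \<open>auto simp: less_mult_imp_div_less\<close>)
  from sum.reindex_bij_betw[OF this, of "\<lambda>(a, j). g a j"] show ?thesis by simp
qed

lemma length_concat_same_length:
  assumes "\<forall>x\<in>set xs. length (f x) = L"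
  shows "length (concat (map f xs)) = length xs * L"
  using assms by (induction xs) auto

lemma nth_concat_same_length:
  assumes "\<forall>x\<in>set xs. length (f x) = L" "p < length xs * L"
  shows "concat (map f xs) ! p = f (xs ! (p div L)) ! (p mod L)"
  using assms
proof (induction xs arbitrary: p)
  case (Cons x xs)
  then have L: "length (f x) = L" and "0 < L" by (auto intro: gr0I)
  show ?case
  proof (cases "p < L")
    case False
    then have "concat (map f xs) ! (p - L) = f (xs ! ((p - L) div L)) ! ((p - L) mod L)"
      using Cons by (intro Cons.IH) auto
    then show ?thesis
      using False L \<open>0 < L\<close> by (simp add: nth_append le_div_geq le_mod_geq)
  qed (use L in \<open>simp add: nth_append\<close>)
qed simp

lemma filter_neq_upt:
  assumes "a \<le> i" "i < b"
  shows "filter (\<lambda>k. k \<noteq> i) [a..<b] = [a..<i] @ [Suc i..<b]"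
proof -
  have "[a..<b] = [a..<i] @ i # [Suc i..<b]"
    using assms by (metis le_trans less_imp_le_nat upt_conv_Cons upt_add_eq_append le_add_diff_inverse)
  then show ?thesis by (auto intro!: filter_True)
qed

definition row_label :: "nat \<Rightarrow> nat \<Rightarrow> nat \<times> nat" where
  "row_label a j = (if a = 0 then (2, j + 3) else if j = 0 then (a + 2, a + 2)
     else (a + 2, if j < a then j + 2 else j + 3))"

definition col_label :: "nat \<Rightarrow> nat \<Rightarrow> nat \<times> nat" where
  "col_label b l = (if l < b then l + 2 else l + 3, b + 2)"

lemma length_row_list: "1 \<le> N \<Longrightarrow> length (row_list (N + 2)) = (N + 1) * N"
  unfolding row_list_def by (subst length_concat_same_length[where L = N]) (auto simp: filter_neq_upt simp del: upt_Suc)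

lemma length_col_list: "1 \<le> N \<Longrightarrow> length (col_list (N + 2)) = (N + 1) * N"
  unfolding col_list_def by (subst length_concat_same_length[where L = N]) (auto simp: filter_neq_upt simp del: upt_Suc)

lemma nth_row_list:
  assumes "1 \<le> N" "p < (N + 1) * N"
  shows "row_list (N + 2) ! p = row_label (p div N) (p mod N)"
proof -
  have a: "p div N < N + 1" and j: "p mod N < N"
    using assms by (auto simp: less_mult_imp_div_less)
  have "row_list (N + 2) ! p = (if p div N = 0 then map (\<lambda>k. (2, k)) [3..<N + 2 + 1]
      else (p div N + 2, p div N + 2) # map (\<lambda>k. (p div N + 2, k))
        (filter (\<lambda>k. k \<noteq> p div N + 2) [3..<N + 2 + 1])) ! (p mod N)"
    unfolding row_list_def using assms a
    by (subst nth_concat_same_length[where L = N]) (auto simp: filter_neq_upt simp del: upt_Suc)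
  then show ?thesis
    using a j by (cases "p mod N") (auto simp: row_label_def filter_neq_upt nth_append simp del: upt_Suc)
qed

lemma nth_col_list:
  assumes "1 \<le> N" "p < (N + 1) * N"
  shows "col_list (N + 2) ! p = col_label (p div N) (p mod N)"
proof -
  have b: "p div N < N + 1" and l: "p mod N < N"
    using assms by (auto simp: less_mult_imp_div_less)
  have "col_list (N + 2) ! p = map (\<lambda>r. (r, p div N + 2))
      (filter (\<lambda>r. r \<noteq> p div N + 2) [2..<N + 2 + 1]) ! (p mod N)"
    unfolding col_list_def using assms b
    by (subst nth_concat_same_length[where L = N]) (auto simp: filter_neq_upt simp del: upt_Suc)
  then show ?thesis
    using b l by (auto simp: col_label_def filter_neq_upt nth_append simp del: upt_Suc)
qed

(* Rows of type 0 are the cohort i = 2, rows of type a (for 1 \<le> a \<le> N) are the f_{a+2}^{2,k}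
   with k \<noteq> a + 2, and the row of type N + a is f_{a+2}^{2,a+2}; rows of one type agree
   off the diagonal. *)
definition row_type :: "nat \<Rightarrow> nat \<Rightarrow> nat \<Rightarrow> nat" where
  "row_type N a j = (if a = 0 then 0 else if j = 0 then N + a else a)"

definition type_row :: "nat \<Rightarrow> nat \<Rightarrow> nat \<Rightarrow> nat \<Rightarrow> real" where
  "type_row N x b l =
     (if x = 0 then of_bool (b \<noteq> 0 \<and> l \<noteq> 0)
      else if x \<le> N then of_bool (b = x \<and> l = 0)
      else if b = 0 then of_bool (x = N + l + 1) - 1
      else if l = 0 then 3 * of_bool (x = N + b) - 1
      else of_bool (x = N + 1 + (if l < b then l - 1 else l)) + of_bool (x = N + b) - 1)"

lemma fval_row_col_label:
  assumes "a \<le> N" "j < N" "b \<le> N" "l < N"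
  shows "fval (fst (row_label a j)) (snd (row_label a j)) (cyc3 (fst (col_label b l)) (snd (col_label b l)))
    = type_row N (row_type N a j) b l - of_bool (a = b \<and> j = l)"
  using assms
  by (cases "a = 0"; cases "j = 0"; cases "b = 0"; cases "l = 0")
    (simp_all add: row_label_def col_label_def row_type_def fval_def cyc3_def type_row_def)

definition type_selector :: "nat \<Rightarrow> real mat" where
  "type_selector N = selector_mat ((N + 1) * N) (2 * N + 1) (\<lambda>p. row_type N (p div N) (p mod N))"

definition type_rows :: "nat \<Rightarrow> real mat" where
  "type_rows N = mat (2 * N + 1) ((N + 1) * N) (\<lambda>(x, c). type_row N x (c div N) (c mod N))"

lemma row_type_less: "a \<le> N \<Longrightarrow> row_type N a j < 2 * N + 1"
  by (simp add: row_type_def)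

lemma M_eq_type_selector_mult_type_rows:
  assumes "1 \<le> N"
  shows "M (N + 2) = type_selector N * type_rows N - 1\<^sub>m ((N + 1) * N)"
proof (rule eq_matI)
  fix p c assume "p < dim_row (type_selector N * type_rows N - 1\<^sub>m ((N + 1) * N))"
    and "c < dim_col (type_selector N * type_rows N - 1\<^sub>m ((N + 1) * N))"
  then have p: "p < (N + 1) * N" and c: "c < (N + 1) * N"
    by (simp_all add: type_selector_def type_rows_def)
  have ab: "p div N \<le> N" "c div N \<le> N" and jl: "p mod N < N" "c mod N < N"
    using p c assms by (auto simp: less_mult_imp_div_less less_Suc_eq_le[symmetric])
  have "p div N = c div N \<and> p mod N = c mod N \<longleftrightarrow> p = c"
    by (metis div_mult_mod_eq)
  moreover have "M (N + 2) $$ (p, c) = fval (fst (row_label (p div N) (p mod N))) (snd (row_label (p div N) (p mod N)))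
      (cyc3 (fst (col_label (c div N) (c mod N))) (snd (col_label (c div N) (c mod N))))"
    unfolding M_def by (subst index_mat) (simp_all only: length_row_list[OF assms] length_col_list[OF assms]
      nth_row_list[OF assms p] nth_col_list[OF assms c] p c prod.case)
  ultimately have "M (N + 2) $$ (p, c)
      = type_row N (row_type N (p div N) (p mod N)) (c div N) (c mod N) - of_bool (p = c)"
    using fval_row_col_label[OF ab(1) jl(1) ab(2) jl(2)] by simp
  also have "\<dots> = (type_selector N * type_rows N - 1\<^sub>m ((N + 1) * N)) $$ (p, c)"
  proof -
    have "(type_selector N * type_rows N) $$ (p, c) = type_rows N $$ (row_type N (p div N) (p mod N), c)"
      unfolding type_selector_def
      by (rule selector_mat_mult_index) (use p c row_type_less[OF ab(1)] in \<open>auto simp: type_rows_def\<close>)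
    then show ?thesis
      using p c row_type_less[OF ab(1)] by (simp add: type_selector_def type_rows_def)
  qed
  finally show "M (N + 2) $$ (p, c) = (type_selector N * type_rows N - 1\<^sub>m ((N + 1) * N)) $$ (p, c)" .
qed (use length_row_list[OF assms] length_col_list[OF assms] in \<open>simp_all add: M_def type_selector_def type_rows_def\<close>)

lemma sum_row_type_fiber:
  fixes g :: "nat \<Rightarrow> nat \<Rightarrow> 'a :: comm_monoid_add"
  assumes "1 \<le> N" "y \<le> 2 * N"
  shows "(\<Sum>(a, j)\<in>{..<N + 1} \<times> {..<N}. if row_type N a j = y then g a j else 0) =
    (if y = 0 then \<Sum>j<N. g 0 j else if y \<le> N then \<Sum>j\<in>{1..<N}. g y j else g (y - N) 0)"
proof -
  let ?F = "{(a, j) \<in> {..<N + 1} \<times> {..<N}. row_type N a j = y}"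
  have "(\<Sum>(a, j)\<in>{..<N + 1} \<times> {..<N}. if row_type N a j = y then g a j else 0) = (\<Sum>(a, j)\<in>?F. g a j)"
    by (auto simp: sum.inter_filter[symmetric] case_prod_unfold intro!: sum.cong)
  also have "?F = (if y = 0 then {0} \<times> {..<N} else if y \<le> N then {y} \<times> {1..<N} else {(y - N, 0)})"
    using assms by (auto simp: row_type_def)
  finally show ?thesis
    by (simp add: sum.cartesian_product[symmetric])
qed

lemma type_rows_mult_type_selector_index:
  assumes "1 \<le> N" "x \<le> 2 * N" "y \<le> 2 * N"
  shows "(type_rows N * type_selector N) $$ (x, y) =
    (if y = 0 then \<Sum>j<N. type_row N x 0 j else if y \<le> N then \<Sum>j\<in>{1..<N}. type_row N x y j
     else type_row N x (y - N) 0)"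
proof -
  have "(type_rows N * type_selector N) $$ (x, y) =
      (\<Sum>c<(N + 1) * N. if row_type N (c div N) (c mod N) = y then type_row N x (c div N) (c mod N) else 0)"
    unfolding type_selector_def
    by (subst mult_selector_mat_index[where k = "2 * N + 1"]) (use assms in \<open>auto simp: type_rows_def intro!: sum.cong\<close>)
  also have "\<dots> = (\<Sum>(a, j)\<in>{..<N + 1} \<times> {..<N}. if row_type N a j = y then type_row N x a j else 0)"
    using assms by (subst sum_div_mod) auto
  finally show ?thesis
    by (simp only: sum_row_type_fiber[OF assms(1,3)])
qed

lemma sum_type_row_first_block:
  assumes "x \<le> 2 * N"
  shows "(\<Sum>j<N. type_row N x 0 j) = (if x \<le> N then 0 else 1 - real N)"
proof (cases "x \<le> N")
  case False
  then have "(\<Sum>j<N. type_row N x 0 j) = (\<Sum>j<N. (if j = x - N - 1 then 1 else 0) - 1)"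
    by (intro sum.cong) (auto simp: type_row_def)
  also have "\<dots> = 1 - real N"
    using False assms by (simp add: sum_subtractf)
  finally show ?thesis using False by simp
qed (auto simp: type_row_def intro!: sum.neutral)

lemma sum_type_row_block:
  assumes "0 < s" "s \<le> N" "x \<le> 2 * N"
  shows "(\<Sum>j\<in>{1..<N}. type_row N x s j) =
    (if x = 0 then real N - 1 else if x \<le> N \<or> x = N + s then 0 else 2 - real N)"
proof -
  consider "x = 0" | "1 \<le> x" "x \<le> N" | "N < x" by linarith
  then show ?thesis
  proof cases
    case 1
    then show ?thesis using assms by (simp add: type_row_def of_nat_diff)
  next
    case 2
    then show ?thesis using assms by (simp add: type_row_def)
  next
    case 3
    let ?hit = "\<lambda>j. x = N + 1 + (if j < s then j - 1 else j)"
    have "{1..<N} \<inter> {j. ?hit j} = (if x < N + s then {x - N} else if N + s < x then {x - N - 1} else {})"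
      using assms 3 by auto
    then have hit_count: "(\<Sum>j\<in>{1..<N}. of_bool (?hit j)) = (of_bool (x \<noteq> N + s) :: real)"
      by (subst sum_of_bool_eq) auto
    have "(\<Sum>j\<in>{1..<N}. type_row N x s j) = (\<Sum>j\<in>{1..<N}. of_bool (?hit j) + (of_bool (x = N + s) - 1))"
      using assms 3 by (intro sum.cong) (auto simp: type_row_def)
    also have "\<dots> = of_bool (x \<noteq> N + s) + (real N - 1) * (of_bool (x = N + s) - 1)"
      using assms by (simp only: sum.distrib hit_count) (simp add: of_nat_diff)
    finally show ?thesis
      using assms 3 by (auto simp: algebra_simps)
  qed
qed

definition reduced_mat :: "nat \<Rightarrow> real mat" where
  "reduced_mat N = mat (2 * N + 1) (2 * N + 1) (\<lambda>(x, y).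
     if x = 0 then (if y = 0 then 1 else if y \<le> N then 1 - real N else 0)
     else if x \<le> N then (if y = 0 then 0 else if y \<le> N then of_bool (x = y) else - of_bool (y = x + N))
     else if y = 0 then real N - 1
     else if y \<le> N then (if x = y + N then 0 else real N - 2)
     else if x = y then -1 else 1)"

lemma one_minus_type_rows_mult_type_selector:
  assumes "1 \<le> N"
  shows "1\<^sub>m (2 * N + 1) - type_rows N * type_selector N = reduced_mat N"
proof (rule eq_matI)
  fix x y assume "x < dim_row (reduced_mat N)" "y < dim_col (reduced_mat N)"
  then have xy: "x \<le> 2 * N" "y \<le> 2 * N" by (auto simp: reduced_mat_def)
  have "dim_row (type_rows N * type_selector N) = 2 * N + 1" "dim_col (type_rows N * type_selector N) = 2 * N + 1"
    by (simp_all add: type_rows_def type_selector_def)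
  then have "(1\<^sub>m (2 * N + 1) - type_rows N * type_selector N) $$ (x, y)
      = of_bool (x = y) - (type_rows N * type_selector N) $$ (x, y)"
    using xy by simp
  also have "\<dots> = reduced_mat N $$ (x, y)"
  proof -
    consider "y = 0" | "0 < y" "y \<le> N" | "N < y" by linarith
    then show ?thesis
    proof cases
      case 1
      then show ?thesis
        using xy type_rows_mult_type_selector_index[OF assms xy] by (simp add: sum_type_row_first_block reduced_mat_def)
    next
      case 2
      then show ?thesis
        using xy type_rows_mult_type_selector_index[OF assms xy] sum_type_row_block[OF 2 xy(1)]
        by (simp add: reduced_mat_def)
    next
      case 3
      then show ?thesis
        using xy type_rows_mult_type_selector_index[OF assms xy] by (auto simp: type_row_def reduced_mat_def)
    qed
  qed
  finally show "(1\<^sub>m (2 * N + 1) - type_rows N * type_selector N) $$ (x, y) = reduced_mat N $$ (x, y)" .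
qed (simp_all add: reduced_mat_def type_rows_def type_selector_def)

lemma det_reduced_mat:
  assumes "1 \<le> N"
  shows "det (reduced_mat N) = (- real N) ^ N * (1 - real N * (real N - 1))"
proof -
  let ?A = "mat N N (\<lambda>(i, j). (if i = j then 0 else real N - 2) + (real N - 1)\<^sup>2)"
  let ?B = "mat N N (\<lambda>(i, j). if i = j then -1 else 1)"
  have "det (reduced_mat N) = det (mat (2 * N) (2 * N) (\<lambda>(i, j).
      reduced_mat N $$ (Suc i, Suc j) - reduced_mat N $$ (Suc i, 0) * reduced_mat N $$ (0, Suc j)))"
    by (rule det_pivot_one) (auto simp: reduced_mat_def)
  also have "mat (2 * N) (2 * N) (\<lambda>(i, j).
      reduced_mat N $$ (Suc i, Suc j) - reduced_mat N $$ (Suc i, 0) * reduced_mat N $$ (0, Suc j))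
    = four_block_mat (1\<^sub>m N) (- 1\<^sub>m N) ?A ?B"
    by (rule eq_matI) (auto simp: reduced_mat_def power2_eq_square algebra_simps)
  also have "det \<dots> = det (?B - ?A * - 1\<^sub>m N)"
    by (rule det_four_block_mat_one_upper_left) auto
  also have "?B - ?A * - 1\<^sub>m N = mat N N (\<lambda>(i, j). (if i = j then - real N else 0) + real N * (real N - 1))"
    by (rule eq_matI) (auto simp: power2_eq_square algebra_simps)
  also have "det \<dots> = (- real N) ^ N * (1 + real N * (real N * (real N - 1)) / - real N)"
    by (rule det_scalar_plus_const_mat) (use assms in simp)
  also have "\<dots> = (- real N) ^ N * (1 - real N * (real N - 1))"
    using assms by simp
  finally show ?thesis .
qed

lemma det_M_add_2:
  assumes "1 \<le> N"
  shows "det (M (N + 2)) = (- real N) ^ N * (1 - real N * (real N - 1))"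
proof -
  let ?m = "(N + 1) * N"
  have "M (N + 2) = (- 1) \<cdot>\<^sub>m (1\<^sub>m ?m - type_selector N * type_rows N)"
    unfolding M_eq_type_selector_mult_type_rows[OF assms]
    by (rule eq_matI) (auto simp: type_selector_def type_rows_def)
  moreover have "even ?m" by simp
  ultimately have "det (M (N + 2)) = det (1\<^sub>m ?m - type_selector N * type_rows N)"
    by (simp add: type_rows_def)
  also have "\<dots> = det (1\<^sub>m (2 * N + 1) - type_rows N * type_selector N)"
    by (rule det_one_minus_mult_commute) (auto simp: type_selector_def type_rows_def)
  also have "\<dots> = (- real N) ^ N * (1 - real N * (real N - 1))"
    by (simp only: one_minus_type_rows_mult_type_selector[OF assms] det_reduced_mat[OF assms])
  finally show ?thesis .
qed

lemma one_minus_mult_pred_ne_zero: "1 - real N * (real N - 1) \<noteq> 0"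
proof -
  have "N * (N - 1) \<noteq> 1"
    by (simp add: mult_eq_1_iff)
  moreover have "real N * (real N - 1) = real (N * (N - 1))"
    by (cases N) (auto simp: algebra_simps)
  ultimately show ?thesis
    by (metis right_minus_eq of_nat_eq_1_iff)
qed

theorem lemma17:
  fixes n :: nat
  assumes "n \<ge> 3"
  shows "det (M n) = (-1) ^ (n - 3) * (real n - 2) ^ (n - 2) * ((real n)\<^sup>2 - 5 * real n + 5)
         \<and> det (M n) \<noteq> 0"
proof -
  define N where "N = n - 2"
  with assms have N: "n = N + 2" "1 \<le> N" by auto
  have det: "det (M n) = (- real N) ^ N * (1 - real N * (real N - 1))"
    unfolding N(1) by (rule det_M_add_2[OF N(2)])
  then have "det (M n) \<noteq> 0"
    using N(2) one_minus_mult_pred_ne_zero[of N] by simp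
  moreover have "(- real N) ^ N * (1 - real N * (real N - 1))
      = (-1) ^ (n - 3) * (real n - 2) ^ (n - 2) * ((real n)\<^sup>2 - 5 * real n + 5)"
  proof -
    have "(- real N) ^ N = (-1) ^ N * real N ^ N"
      by (rule power_minus)
    moreover have "(-1 :: real) ^ N = - ((-1) ^ (N - 1))"
      using N(2) by (cases N) simp_all
    moreover have "n - 3 = N - 1" "n - 2 = N" "real n = real N + 2"
      using N by auto
    ultimately show ?thesis
      by (simp add: power2_eq_square algebra_simps)
  qed
  ultimately show ?thesis
    using det by simp
qed

end
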